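(* Let $\mu$ be a probability measure supported on a symmetric convex domain $\Omega\subset\mathbb R^n$ and let $p>0$. For every nonnegative function $f$ on $\Omega$ with $f^p\in\mathrm{QC}(\Omega,\mu)$, $$\int_0^\infty t^{p-1}\mu^*(\{x\in\Omega: f(x)<t\})\,dt\le\int_\Omega f^{p-1}\Phi_f\,d\mu.$$ Moreover, for every positive function $f$ on $\Omega$ with $f^p\in\mathrm{QC}(\Omega,\mu)$, $$\int_0^\infty t^{p-1}\mu^*\Big(\Big\{x\in\Omega:\frac1{f(x)}>t\Big\}\Big)\,dt\le\int_\Omega f^{-p-1}\Phi_f\,d\mu.$$
   Context: Symmetric convex domain: nonempty open convex $\Omega=-\Omega\subset\mathbb R^n$. Symmetric function: $f(x)=f(-x)$; quasi-convex: $\{f<\lambda\}$ convex for all $\lambda$. For Borel $A\subset\mathbb R^n$, $\varepsilon\in(0,1)$: $A_\varepsilon:=A\cup\{x\in\mathbb R^n:\exists y,\ \int_0^1\mathbf 1_A((1-t)x+ty)\,dt>1-\varepsilon\}$; $\mu^*(A):=\liminf_{\varepsilon\downarrow0}(\mu(A_\varepsilon)-\mu(A))/\varepsilon$. For nonnegative symmetric quasi-convex $f$, $\Phi_f(x):=\limsup_{\varepsilon\downarrow0}\frac{f(x)-f(\frac{1-\varepsilon}{1+\varepsilon}x)}{\varepsilon}$. $\mathrm{QC}(\Omega,\mu)$ is the set of all nonnegative, continuous, symmetric quasi-convex $f$ on $\Omega$ for which there exist a nonnegative Borel $g\in L^1(\mu)$ and $\varepsilon_0\in(0,1]$ with $\sup_{\varepsilon\in(0,\varepsilon_0)}\frac{f(x)-f(\frac{1-\varepsilon}{1+\varepsilon}x)}{\varepsilon}\le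 g(x)$ for all $x\in\Omega$. *)

theory Defs
  imports "HOL-Probability.Probability"
begin

definition sym_convex_domain :: "'a::euclidean_space set \<Rightarrow> bool" where
  "sym_convex_domain \<Omega> \<longleftrightarrow> \<Omega> \<noteq> {} \<and> open \<Omega> \<and> convex \<Omega> \<and> uminus ` \<Omega> = \<Omega>"

definition eps_ext :: "'a::euclidean_space set \<Rightarrow> real \<Rightarrow> 'a set" where
  "eps_ext A \<epsilon> = A \<union> {x. \<exists>y. (LINT t:{0..1}|lborel. indicator A ((1 - t) *\<^sub>R x + t *\<^sub>R y)) > 1 - \<epsilon>}"

text \<open>The boundary measure mu^*(A) = liminf_{eps -> 0+} (mu(A_eps) - mu(A)) / eps.
  Since A_eps need not be Borel, mu(A_eps) is read as the outer measure.\<close>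
definition mu_star :: "'a::euclidean_space measure \<Rightarrow> 'a set \<Rightarrow> ereal" where
  "mu_star \<mu> A = Liminf (at_right 0)
     (\<lambda>\<epsilon>. ereal ((enn2real (outer_measure_of \<mu> (eps_ext A \<epsilon>)) - measure \<mu> A) / \<epsilon>))"

definition Phi :: "('a::euclidean_space \<Rightarrow> real) \<Rightarrow> 'a \<Rightarrow> ereal" where
  "Phi f x = Limsup (at_right 0)
     (\<lambda>\<epsilon>. ereal ((f x - f (((1 - \<epsilon>) / (1 + \<epsilon>)) *\<^sub>R x)) / \<epsilon>))"

definition QC :: "'a::euclidean_space set \<Rightarrow> 'a measure \<Rightarrow> ('a \<Rightarrow> real) \<Rightarrow> bool" where
  "QC \<Omega> \<mu> h \<longleftrightarrow>
     (\<forall>x\<in>\<Omega>. 0 \<le> h x) \<and> continuous_on \<Omega> h \<and> (\<forall>x\<in>\<Omega>. h (- x) = h x) \<and>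
     (\<forall>c. convex {x\<in>\<Omega>. h x < c}) \<and>
     (\<exists>g \<epsilon>0. g \<in> borel_measurable borel \<and> (\<forall>x. 0 \<le> g x) \<and> integrable \<mu> g \<and>
        0 < \<epsilon>0 \<and> \<epsilon>0 \<le> 1 \<and>
        (\<forall>x\<in>\<Omega>. \<forall>\<epsilon>\<in>{0<..<\<epsilon>0}. (h x - h (((1 - \<epsilon>) / (1 + \<epsilon>)) *\<^sub>R x)) / \<epsilon> \<le> g x))"

end

theory Submission
  imports Defs
begin

text \<open>
  A sublevel set \<open>A = {f < s}\<close> of a symmetric quasi-convex \<open>f\<close> is open, convex and symmetric.
  A point of the enlargement \<open>A\<^sub>\<epsilon>\<close> sees \<open>A\<close> along a segment of length more than \<open>1 - \<epsilon>\<close>, so it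
  lies on a chord of \<open>A\<close> prolonged by at most \<open>\<epsilon> / (1 - \<epsilon>)\<close> of its length; by convexity and
  symmetry its contraction by \<open>(1 - \<epsilon>) / (1 + \<epsilon>)\<close> lies in \<open>A\<close>. Hence, up to the null set
  outside \<open>\<Omega>\<close>, \<open>A\<^sub>\<epsilon> - A\<close> lies in the shell of points \<open>x\<close> with
  \<open>f ((1 - \<epsilon>) / (1 + \<epsilon>) x) < s \<le> f x\<close>, and \<open>\<mu>\<^sup>*(A)\<close> is at most the liminf of the shell
  measures divided by \<open>\<epsilon>\<close>. Integrating against \<open>t powr (p - 1) dt\<close> and exchanging the
  integrals, the shell of a fixed \<open>x\<close> contributes \<open>(f x powr p - f (c x) powr p) / p\<close> with
  \<open>c = (1 - \<epsilon>) / (1 + \<epsilon>)\<close>; Fatou's lemma, its reverse form under the domination built into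
  \<open>QC\<close>, and the mean value theorem for \<open>t powr p\<close> turn the difference quotients into
  \<open>f x powr (p - 1) * Phi f x\<close>. The second inequality is the same
  computation with the level \<open>1 / t\<close> and the exponent \<open>-p\<close>.
\<close>

section \<open>Enlargements of symmetric convex sets\<close>

lemma convex_scaleR_add_mem:
  fixes A :: "'a::real_vector set"
  assumes "convex A" "0 \<in> A" "x \<in> A" "y \<in> A" "0 \<le> a" "0 \<le> b" "a + b \<le> 1"
  shows "a *\<^sub>R x + b *\<^sub>R y \<in> A"
proof (cases "a + b = 0")
  case True
  then have "a = 0" "b = 0" using assms by auto
  then show ?thesis using assms by simp
next
  case False
  then have pos: "a + b > 0" using assms by auto
  define z where "z = (a / (a + b)) *\<^sub>R x + (b / (a + b)) *\<^sub>R y"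
  have z: "z \<in> A" unfolding z_def
    by (rule convexD[OF assms(1,3,4)]) (use assms pos in \<open>auto simp: divide_simps\<close>)
  have "(1 - (a + b)) *\<^sub>R 0 + (a + b) *\<^sub>R z \<in> A"
    by (rule convexD[OF assms(1,2) z]) (use assms in auto)
  moreover have "(a + b) *\<^sub>R z = a *\<^sub>R x + b *\<^sub>R y"
    using pos by (simp add: z_def scaleR_add_right)
  ultimately show ?thesis by simp
qed

lemma zero_mem_convex_symmetric:
  fixes A :: "'a::real_vector set"
  assumes "convex A" "\<And>x. x \<in> A \<Longrightarrow> - x \<in> A" "x \<in> A"
  shows "0 \<in> A"
proof -
  have "(1/2) *\<^sub>R x + (1/2) *\<^sub>R (- x) \<in> A"
    by (rule convexD[OF assms(1,3) assms(2)[OF assms(3)]]) auto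
  then show ?thesis by simp
qed

lemma lborel_measure_gt_imp_far_points:
  fixes T :: "real set"
  assumes "T \<in> sets lborel" "bounded T" "0 \<le> d" "measure lborel T > d"
  obtains a b where "a \<in> T" "b \<in> T" "b - a > d"
proof -
  have ne: "T \<noteq> {}" using assms(3,4) by auto
  have bdd: "bdd_below T" "bdd_above T"
    using assms(2) by (auto simp: bounded_imp_bdd_below bounded_imp_bdd_above)
  have "T \<subseteq> {Inf T .. Sup T}" using bdd by (auto intro: cInf_lower cSup_upper)
  then have "measure lborel T \<le> measure lborel {Inf T .. Sup T}"
    using assms(1) cInf_le_cSup[OF ne bdd(2) bdd(1)]
    by (intro measure_mono_fmeasurable) (auto simp: fmeasurable_def)
  also have "\<dots> = Sup T - Inf T" using ne bdd by (simp add: cInf_le_cSup)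
  finally have diam: "measure lborel T \<le> Sup T - Inf T" .
  define \<delta> where "\<delta> = (measure lborel T - d) / 2"
  have \<delta>: "\<delta> > 0" using assms(4) by (simp add: \<delta>_def)
  obtain a where a: "a \<in> T" "a < Inf T + \<delta>"
    using cInf_less_iff[OF ne bdd(1), of "Inf T + \<delta>"] \<delta> by auto
  obtain b where b: "b \<in> T" "b > Sup T - \<delta>"
    using less_cSup_iff[OF ne bdd(2), of "Sup T - \<delta>"] \<delta> by auto
  have "b - a > d" using a(2) b(2) diam unfolding \<delta>_def by (simp add: field_simps)
  with a(1) b(1) show thesis by (rule that)
qed

lemma eps_ext_imp_chord_extension:
  fixes A :: "'a::euclidean_space set"
  assumes A: "open A" and \<epsilon>: "0 < \<epsilon>" "\<epsilon> < 1" and x: "x \<in> eps_ext A \<epsilon>" "x \<notin> A"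
  obtains P Q s where "P \<in> A" "Q \<in> A" "0 \<le> s" "s \<le> \<epsilon> / (1 - \<epsilon>)" "x = (1 + s) *\<^sub>R P - s *\<^sub>R Q"
proof -
  obtain y where y: "(LINT t:{0..1}|lborel. indicator A ((1 - t) *\<^sub>R x + t *\<^sub>R y)) > 1 - \<epsilon>"
    using x by (auto simp: eps_ext_def)
  define L where "L t = (1 - t) *\<^sub>R x + t *\<^sub>R y" for t :: real
  define T where "T = {0..1} \<inter> L -` A"
  have "open (L -` A)" unfolding L_def by (rule open_vimage[OF A]) (intro continuous_intros)
  then have T_sets: "T \<in> sets lborel" unfolding T_def by auto
  have T_sub: "T \<subseteq> {0..1}" unfolding T_def by auto
  have "emeasure lborel T \<le> emeasure lborel {0..1::real}" by (rule emeasure_mono[OF T_sub]) simp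
  then have "emeasure lborel T \<noteq> \<infinity>" by (auto simp: top_unique)
  then have "(LINT t:{0..1}|lborel. indicator A (L t)) = measure lborel T"
    unfolding set_lebesgue_integral_def T_def using T_sets
    by (subst Bochner_Integration.integral_cong[of _ _ _ "indicator T"])
      (auto simp: indicator_def T_def)
  then have "measure lborel T > 1 - \<epsilon>" using y by (simp add: L_def)
  then obtain a b where ab: "a \<in> T" "b \<in> T" "b - a > 1 - \<epsilon>"
    using lborel_measure_gt_imp_far_points[OF T_sets]
      bounded_subset[OF compact_imp_bounded[OF compact_Icc] T_sub] \<epsilon>
    by (metis diff_ge_0_iff_ge less_imp_le)
  have a: "0 \<le> a" and b: "b \<le> 1" using ab T_sub by auto
  define s where "s = a / (b - a)"
  have ba: "b - a > 0" using ab(3) \<epsilon> by simp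
  have "a * (1 - \<epsilon>) \<le> \<epsilon> * (b - a)" using ab(3) a b \<epsilon>
    by (smt (verit, best) mult_left_mono mult_right_mono)
  then have "s \<le> \<epsilon> / (1 - \<epsilon>)" using ba \<epsilon> by (simp add: s_def divide_simps)
  moreover have "0 \<le> s" using a ba by (simp add: s_def)
  moreover have "L a \<in> A" "L b \<in> A" using ab by (auto simp: T_def)
  moreover have "x = (1 + s) *\<^sub>R L a - s *\<^sub>R L b"
  proof -
    have "(1 + s) *\<^sub>R L a - s *\<^sub>R L b = L a + (s * (b - a)) *\<^sub>R (x - y)"
      by (simp add: L_def algebra_simps)
    also have "s * (b - a) = a" using ba by (simp add: s_def)
    finally show ?thesis by (simp add: L_def algebra_simps)
  qed
  ultimately show thesis using that by blast
qed

definition contraction :: "real \<Rightarrow> real" where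
  "contraction \<epsilon> = (1 - \<epsilon>) / (1 + \<epsilon>)"

lemma contraction_bounds: "0 < \<epsilon> \<Longrightarrow> \<epsilon> < 1 \<Longrightarrow> 0 \<le> contraction \<epsilon> \<and> contraction \<epsilon> \<le> 1"
  by (auto simp: contraction_def divide_simps)

lemma contraction_scaleR_mem_of_eps_ext:
  fixes A :: "'a::euclidean_space set"
  assumes A: "open A" "convex A" "\<And>x. x \<in> A \<Longrightarrow> - x \<in> A"
    and \<epsilon>: "0 < \<epsilon>" "\<epsilon> < 1" and x: "x \<in> eps_ext A \<epsilon>"
  shows "contraction \<epsilon> *\<^sub>R x \<in> A"
proof -
  define c where "c = contraction \<epsilon>"
  have c: "0 \<le> c" "c \<le> 1" using contraction_bounds[OF \<epsilon>] by (auto simp: c_def)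
  show ?thesis
  proof (cases "x \<in> A")
    case True
    have "c *\<^sub>R x + 0 *\<^sub>R x \<in> A"
      using convex_scaleR_add_mem[OF A(2) zero_mem_convex_symmetric[OF A(2,3) True] True True, of c 0] c
      by simp
    then show ?thesis by (simp add: c_def)
  next
    case False
    then obtain P Q s where PQ: "P \<in> A" "Q \<in> A" and s: "0 \<le> s" "s \<le> \<epsilon> / (1 - \<epsilon>)"
      and xeq: "x = (1 + s) *\<^sub>R P - s *\<^sub>R Q"
      using eps_ext_imp_chord_extension[OF A(1) \<epsilon> x] by blast
    have "c * (1 + 2 * s) \<le> c * (1 + 2 * (\<epsilon> / (1 - \<epsilon>)))"
      using s c by (intro mult_left_mono) auto
    \<comment> \<open>this identity is what singles out the factor \<open>(1 - \<epsilon>) / (1 + \<epsilon>)\<close>\<close>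
    also have "\<dots> = 1"
      using \<epsilon> mult_strict_mono[of \<epsilon> 1 \<epsilon> 1] by (simp add: c_def contraction_def field_simps)
    finally have "c * (1 + s) + c * s \<le> 1" by (simp add: algebra_simps)
    then have "(c * (1 + s)) *\<^sub>R P + (c * s) *\<^sub>R (- Q) \<in> A"
      using convex_scaleR_add_mem[OF A(2) zero_mem_convex_symmetric[OF A(2,3) PQ(1)] PQ(1) A(3)[OF PQ(2)]]
        c s by simp
    then show ?thesis by (simp add: xeq c_def algebra_simps)
  qed
qed

lemma Liminf_filterlim_le:
  fixes g :: "_ \<Rightarrow> 'b::complete_lattice"
  assumes "filterlim e G F"
  shows "Liminf G g \<le> Liminf F (\<lambda>x. g (e x))"
proof -
  have "Liminf G g \<le> Liminf (filtermap e F) g"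
    using assms unfolding filterlim_def Liminf_def by (intro SUP_subset_mono) (auto dest: filter_leD)
  also have "\<dots> \<le> Liminf F (\<lambda>x. g (e x))" by (rule Liminf_filtermap_le)
  finally show ?thesis .
qed

lemma Limsup_filterlim_ge:
  fixes g :: "_ \<Rightarrow> 'b::complete_lattice"
  assumes "filterlim e G F"
  shows "Limsup F (\<lambda>x. g (e x)) \<le> Limsup G g"
proof -
  have "Limsup F (\<lambda>x. g (e x)) \<le> Limsup (filtermap e F) g" by (rule Limsup_filtermap_ge)
  also have "\<dots> \<le> Limsup G g"
    using assms unfolding filterlim_def Limsup_def by (intro INF_superset_mono) (auto dest: filter_leD)
  finally show ?thesis .
qed

lemma e2ennreal_ereal_mult:
  assumes "0 \<le> k"
  shows "e2ennreal (ereal k * x) = ennreal k * e2ennreal x"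
proof (cases x)
  case (real r)
  show ?thesis
  proof (cases "0 \<le> r")
    case True
    then show ?thesis using real assms by (simp add: ennreal_mult)
  next
    case False
    then have "k * r \<le> 0" using assms by (simp add: mult_nonneg_nonpos)
    then show ?thesis using real False by (simp add: ennreal_neg)
  qed
next
  case PInf
  then show ?thesis using assms by (cases "k = 0") (auto simp: ennreal_mult_top)
next
  case MInf
  then show ?thesis using assms by (cases "k = 0") (auto simp: e2ennreal_neg)
qed

lemma liminf_ennreal_eq_e2ennreal:
  "liminf (\<lambda>n. ennreal (r n)) = e2ennreal (liminf (\<lambda>n. ereal (r n)))"
  using Liminf_compose_continuous_mono[OF continuous_on_e2ennreal, of sequentially "\<lambda>n. ereal (r n)"]
  by (simp add: mono_def e2ennreal_mono)

lemma limsup_ennreal_eq_e2ennreal: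
  "limsup (\<lambda>n. ennreal (r n)) = e2ennreal (limsup (\<lambda>n. ereal (r n)))"
  using Limsup_compose_continuous_mono[OF continuous_on_e2ennreal, of sequentially "\<lambda>n. ereal (r n)"]
  by (simp add: mono_def e2ennreal_mono)

lemma seq_tendsto_zero_below:
  fixes e0 :: real
  assumes "0 < e0"
  obtains e :: "nat \<Rightarrow> real" where "\<And>n. 0 < e n" "\<And>n. e n < e0" "e \<longlonglongrightarrow> 0"
proof
  show "0 < e0 / 2 * inverse (real (Suc n))" for n using assms by simp
  show "e0 / 2 * inverse (real (Suc n)) < e0" for n
    using assms by (simp add: divide_simps)
  show "(\<lambda>n. e0 / 2 * inverse (real (Suc n))) \<longlonglongrightarrow> 0"
    by (rule tendsto_mult_right_zero[OF LIMSEQ_inverse_real_of_nat])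
qed

lemma powr_diff_le_max_mult:
  fixes a b r :: real
  assumes r: "r \<noteq> 0" and b: "0 < b" "b \<le> a"
  shows "(a powr r - b powr r) / r \<le> max (a powr (r - 1)) (b powr (r - 1)) * (a - b)"
proof (cases "b = a")
  case False
  then have ba: "b < a" using b by simp
  have "\<exists>z. b < z \<and> z < a \<and> a powr r - b powr r = (a - b) * (r * z powr (r - 1))"
    by (rule MVT2[OF ba]) (use b in \<open>auto intro!: has_real_derivative_powr\<close>)
  then obtain z where z: "b < z" "z < a" "a powr r - b powr r = (a - b) * (r * z powr (r - 1))"
    by blast
  have "(a powr r - b powr r) / r = z powr (r - 1) * (a - b)" using z(3) r by simp
  also have "\<dots> \<le> max (a powr (r - 1)) (b powr (r - 1)) * (a - b)"
  proof (intro mult_right_mono)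
    show "z powr (r - 1) \<le> max (a powr (r - 1)) (b powr (r - 1))"
    proof (cases "0 \<le> r - 1")
      case True
      then show ?thesis using z b by (simp add: le_max_iff_disj powr_mono2)
    next
      case False
      then show ?thesis using z b by (simp add: le_max_iff_disj powr_mono2')
    qed
  qed (use ba in simp)
  finally show ?thesis .
qed simp

lemma limsup_powr_difference_quotient_le:
  fixes a r :: real and b e :: "nat \<Rightarrow> real" and L :: ereal
  assumes r: "r \<noteq> 0" and a: "0 < a" and b: "b \<longlonglongrightarrow> a" "\<And>n. b n \<le> a"
    and e: "\<And>n. 0 < e n"
    and L: "limsup (\<lambda>n. ereal ((a - b n) / e n)) \<le> L"
  shows "limsup (\<lambda>n. ennreal ((a powr r - b n powr r) / (r * e n))) \<le> ennreal (a powr (r - 1)) * e2ennreal L"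
proof -
  define K where "K n = max (a powr (r - 1)) (b n powr (r - 1))" for n
  define k where "k = a powr (r - 1)"
  have k: "0 < k" using a by (simp add: k_def)
  have "(\<lambda>n. b n powr (r - 1)) \<longlonglongrightarrow> k"
    unfolding k_def by (rule tendsto_powr[OF b(1) tendsto_const]) (use a in simp)
  then have "K \<longlonglongrightarrow> max k k" unfolding K_def k_def by (intro tendsto_max tendsto_const)
  then have K: "(\<lambda>n. ereal (K n)) \<longlonglongrightarrow> ereal k" by (simp add: tendsto_ereal)
  have "eventually (\<lambda>n. 0 < b n) sequentially" using b(1) a by (simp add: order_tendstoD(1))
  then have "eventually (\<lambda>n. ereal ((a powr r - b n powr r) / (r * e n))
      \<le> ereal (K n) * ereal ((a - b n) / e n)) sequentially"
  proof (rule eventually_mono)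
    fix n assume "0 < b n"
    then have "((a powr r - b n powr r) / r) / e n \<le> (K n * (a - b n)) / e n"
      using powr_diff_le_max_mult[OF r _ b(2)] e[of n] unfolding K_def by (intro divide_right_mono) auto
    then show "ereal ((a powr r - b n powr r) / (r * e n)) \<le> ereal (K n) * ereal ((a - b n) / e n)"
      by simp
  qed
  then have "limsup (\<lambda>n. ereal ((a powr r - b n powr r) / (r * e n)))
      \<le> limsup (\<lambda>n. ereal (K n) * ereal ((a - b n) / e n))"
    by (rule Limsup_mono)
  also have "\<dots> = ereal k * limsup (\<lambda>n. ereal ((a - b n) / e n))"
    by (rule ereal_limsup_lim_mult[OF K]) (use k in auto)
  also have "\<dots> \<le> ereal k * L" using L k by (intro ereal_mult_left_mono) auto
  finally show ?thesis
    using k unfolding limsup_ennreal_eq_e2ennreal k_def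
    by (metis e2ennreal_ereal_mult e2ennreal_mono less_imp_le)
qed

lemma inverse_diff_div_le:
  fixes a b d m p :: real
  assumes "0 < m" "m \<le> b" "b \<le> a" "0 < d" "0 < p"
  shows "(1 / b - 1 / a) / p / d \<le> ((a - b) / d) / (p * m * m)"
proof -
  have "(1 / b - 1 / a) / p / d = ((a - b) / d) / (p * (a * b))"
    using assms by (simp add: field_simps)
  also have "\<dots> \<le> ((a - b) / d) / (p * (m * m))"
    using assms by (intro divide_left_mono mult_left_mono mult_mono mult_pos_pos) auto
  finally show ?thesis by (simp add: mult.assoc)
qed

lemma nn_integral_powr_weight:
  fixes p U V :: real and S :: "real set"
  assumes p: "0 < p" and UV: "0 \<le> U" "U \<le> V"
    and S: "\<And>t. 0 < t \<Longrightarrow> U < t \<Longrightarrow> t < V \<Longrightarrow> t \<in> S"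
      "\<And>t. 0 < t \<Longrightarrow> t \<in> S \<Longrightarrow> U \<le> t \<and> t \<le> V"
  shows "(\<integral>\<^sup>+t. indicator {0<..} t * ennreal (t powr (p - 1)) * indicator S t \<partial>lborel)
    = ennreal ((V powr p - U powr p) / p)"
proof -
  have integral: "((\<lambda>t. t powr (p - 1)) has_integral ((V powr p - U powr p) / p)) {U..V}"
  proof (cases "U = 0")
    case True
    then show ?thesis using has_integral_powr_from_0[of "p - 1" V] p UV by simp
  next
    case False
    then have U: "0 < U" using UV by simp
    have "((\<lambda>t. t powr (p - 1)) has_integral (V powr p / p - U powr p / p)) {U..V}"
    proof (rule fundamental_theorem_of_calculus[OF UV(2)])
      fix t assume "t \<in> {U..V}"
      then have "0 < t" using U by simp
      then have "((\<lambda>t. t powr p / p) has_real_derivative (p * t powr (p - 1)) / p) (at t)"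
        by (intro DERIV_cdivide has_real_derivative_powr)
      then show "((\<lambda>t. t powr p / p) has_vector_derivative t powr (p - 1)) (at t within {U..V})"
        using p
        by (simp add: has_real_derivative_iff_has_vector_derivative has_vector_derivative_at_within)
    qed
    then show ?thesis by (simp add: diff_divide_distrib)
  qed
  have "(\<integral>\<^sup>+t. ennreal (t powr (p - 1)) * indicator {U..V} t \<partial>lborel) = ennreal ((V powr p - U powr p) / p)"
    by (rule nn_integral_has_integral_lebesgue'[OF _ integral]) simp
  moreover have "AE t in lborel. indicator {0<..} t * ennreal (t powr (p - 1)) * indicator S t
      = ennreal (t powr (p - 1)) * indicator {U..V} t"
    using AE_lborel_singleton[of 0] AE_lborel_singleton[of U] AE_lborel_singleton[of V]
  proof eventually_elim
    case (elim t)
    show ?case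
    proof (cases "0 < t")
      case True
      then have "t \<in> S \<longleftrightarrow> t \<in> {U..V}" using S elim by force
      then show ?thesis using True by (simp add: indicator_def)
    next
      case False
      then show ?thesis using UV elim by (simp add: indicator_def)
    qed
  qed
  ultimately show ?thesis by (simp add: nn_integral_cong_AE)
qed

lemma nn_integral_powr_weight_between:
  fixes p a b :: real
  assumes "0 < p" "0 \<le> b" "b \<le> a"
  shows "(\<integral>\<^sup>+t. indicator {0<..} t * ennreal (t powr (p - 1)) * indicator {t. b < t \<and> t \<le> a} t \<partial>lborel)
    = ennreal ((a powr p - b powr p) / p)"
  by (rule nn_integral_powr_weight) (use assms in auto)

lemma nn_integral_powr_weight_inverse_between:
  fixes p a b :: real
  assumes p: "0 < p" and ab: "0 < b" "b \<le> a"
  shows "(\<integral>\<^sup>+t. indicator {0<..} t * ennreal (t powr (p - 1)) *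
      indicator {t. b < 1 / t \<and> 1 / t \<le> a} t \<partial>lborel) = ennreal ((b powr (- p) - a powr (- p)) / p)"
proof -
  have "(\<integral>\<^sup>+t. indicator {0<..} t * ennreal (t powr (p - 1)) *
      indicator {t. b < 1 / t \<and> 1 / t \<le> a} t \<partial>lborel) = ennreal (((1 / b) powr p - (1 / a) powr p) / p)"
    by (rule nn_integral_powr_weight[OF p]) (use ab in \<open>auto simp: field_simps\<close>)
  then show ?thesis using ab by (simp add: powr_divide powr_minus_divide)
qed

lemma limsup_difference_quotient_le_Phi:
  assumes e: "\<And>n. 0 < e n" "e \<longlonglongrightarrow> 0"
  shows "limsup (\<lambda>n. ereal ((f x - f (contraction (e n) *\<^sub>R x)) / e n)) \<le> Phi f x"
proof -
  have "filterlim e (at_right 0) sequentially"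
    by (rule tendsto_imp_filterlim_at_right[OF e(2)]) (use e(1) in auto)
  from Limsup_filterlim_ge[OF this, of "\<lambda>\<epsilon>. ereal ((f x - f (((1 - \<epsilon>) / (1 + \<epsilon>)) *\<^sub>R x)) / \<epsilon>)"]
  show ?thesis by (simp add: Phi_def contraction_def)
qed

section \<open>Symmetric quasi-convex functions\<close>

lemma QC_dominating_sequence:
  assumes "QC \<Omega> \<mu> h"
  obtains g e where "integrable \<mu> g" "\<And>n. 0 < e n" "\<And>n. e n < 1" "e \<longlonglongrightarrow> 0"
    "\<And>n x. x \<in> \<Omega> \<Longrightarrow> (h x - h (contraction (e n) *\<^sub>R x)) / e n \<le> g x"
proof -
  obtain g e0 where g: "integrable \<mu> g" and e0: "0 < e0" "e0 \<le> 1"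
    and dom: "\<forall>x\<in>\<Omega>. \<forall>\<epsilon>\<in>{0<..<e0}. (h x - h (((1 - \<epsilon>) / (1 + \<epsilon>)) *\<^sub>R x)) / \<epsilon> \<le> g x"
    using assms unfolding QC_def by blast
  obtain e where e: "\<And>n. 0 < e n" "\<And>n. e n < e0" "e \<longlonglongrightarrow> 0"
    using seq_tendsto_zero_below[OF e0(1)] by blast
  have "e n < 1" for n using e(2)[of n] e0(2) by linarith
  then show thesis
    by (rule that[OF g e(1) _ e(3)]) (use e dom in \<open>auto simp: contraction_def\<close>)
qed

locale sym_quasiconvex =
  fixes \<Omega> :: "'a::euclidean_space set" and f :: "'a \<Rightarrow> real"
  assumes domain: "sym_convex_domain \<Omega>"
    and continuous: "continuous_on \<Omega> f"
    and symmetric: "\<And>x. x \<in> \<Omega> \<Longrightarrow> f (- x) = f x"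
    and convex_sublevel: "\<And>s. convex {x\<in>\<Omega>. f x < s}"
begin

lemma open_domain: "open \<Omega>" and convex_domain: "convex \<Omega>"
  using domain by (auto simp: sym_convex_domain_def)

lemma uminus_mem: "x \<in> \<Omega> \<Longrightarrow> - x \<in> \<Omega>"
  using domain unfolding sym_convex_domain_def by (metis imageI minus_minus)

lemma scaleR_mem_and_le:
  assumes x: "x \<in> \<Omega>" and c: "0 \<le> c" "c \<le> 1"
  shows "c *\<^sub>R x \<in> \<Omega>" "f (c *\<^sub>R x) \<le> f x"
proof -
  have "((1 + c) / 2) *\<^sub>R x + ((1 - c) / 2) *\<^sub>R (- x) = ((1 + c) / 2 - (1 - c) / 2) *\<^sub>R x"
    by (simp add: scaleR_diff_left)
  then have cx: "c *\<^sub>R x = ((1 + c) / 2) *\<^sub>R x + ((1 - c) / 2) *\<^sub>R (- x)"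
    by (simp add: field_simps)
  show "c *\<^sub>R x \<in> \<Omega>" unfolding cx
    by (rule convexD[OF convex_domain x uminus_mem[OF x]]) (use c in \<open>auto simp: field_simps\<close>)
  show "f (c *\<^sub>R x) \<le> f x"
  proof (rule field_le_epsilon)
    fix e :: real assume "0 < e"
    have "c *\<^sub>R x \<in> {y\<in>\<Omega>. f y < f x + e}" unfolding cx
      by (rule convexD[OF convex_sublevel])
        (use c x uminus_mem[OF x] symmetric[OF x] \<open>0 < e\<close> in \<open>auto simp: field_simps\<close>)
    then show "f (c *\<^sub>R x) \<le> f x + e" by simp
  qed
qed

lemmas scaleR_mem = scaleR_mem_and_le(1) and f_scaleR_le = scaleR_mem_and_le(2)

lemma zero_mem: "0 \<in> \<Omega>"
proof -
  obtain x where "x \<in> \<Omega>" using domain by (auto simp: sym_convex_domain_def)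
  then show ?thesis using zero_mem_convex_symmetric convex_domain uminus_mem by blast
qed

lemma f_zero_le: "x \<in> \<Omega> \<Longrightarrow> f 0 \<le> f x"
  using f_scaleR_le[of x 0] by simp

definition sublevel :: "real \<Rightarrow> 'a set" where
  "sublevel s = {x\<in>\<Omega>. f x < s}"

lemma open_sublevel: "open (sublevel s)"
proof -
  have "open (f -` {..<s} \<inter> \<Omega>)"
    using continuous open_domain by (simp add: continuous_on_open_vimage)
  moreover have "sublevel s = f -` {..<s} \<inter> \<Omega>" by (auto simp: sublevel_def)
  ultimately show ?thesis by simp
qed

lemma uminus_mem_sublevel: "x \<in> sublevel s \<Longrightarrow> - x \<in> sublevel s"
  using uminus_mem symmetric by (simp add: sublevel_def)

lemma contraction_scaleR_mem_sublevel:
  "0 < \<epsilon> \<Longrightarrow> \<epsilon> < 1 \<Longrightarrow> x \<in> eps_ext (sublevel s) \<epsilon> \<Longrightarrow> contraction \<epsilon> *\<^sub>R x \<in> sublevel s"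
  using contraction_scaleR_mem_of_eps_ext[OF open_sublevel _ uminus_mem_sublevel] convex_sublevel
  by (simp add: sublevel_def)

lemma tendsto_f_contraction:
  assumes x: "x \<in> \<Omega>" and e: "e \<longlonglongrightarrow> 0"
  shows "(\<lambda>n. f (contraction (e n) *\<^sub>R x)) \<longlonglongrightarrow> f x"
proof -
  have "(\<lambda>n. contraction (e n)) \<longlonglongrightarrow> (1 - 0) / (1 + 0)" unfolding contraction_def
    by (intro tendsto_intros e) auto
  then have "(\<lambda>n. contraction (e n) *\<^sub>R x) \<longlonglongrightarrow> 1 *\<^sub>R x" by (intro tendsto_intros) simp
  moreover have "isCont f x" using continuous open_domain x continuous_on_eq_continuous_at by blast
  ultimately show ?thesis using isCont_tendsto_compose by fastforce
qed

lemma limsup_powr_difference_quotient_le_Phi: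
  assumes x: "x \<in> \<Omega>" "0 < f x" and r: "r \<noteq> 0"
    and e: "\<And>n. 0 < e n" "\<And>n. e n < 1" "e \<longlonglongrightarrow> 0"
  shows "limsup (\<lambda>n. ennreal ((f x powr r - f (contraction (e n) *\<^sub>R x) powr r) / (r * e n)))
    \<le> ennreal (f x powr (r - 1)) * e2ennreal (Phi f x)"
  using contraction_bounds[OF e(1,2)]
  by (intro limsup_powr_difference_quotient_le[OF r x(2) tendsto_f_contraction[OF x(1) e(3)]]
      f_scaleR_le[OF x(1)] e(1) limsup_difference_quotient_le_Phi[OF e(1,3)]) auto

end

lemma QC_imp_sym_quasiconvex:
  assumes \<Omega>: "sym_convex_domain \<Omega>" and p: "0 < p" and nonneg: "\<forall>x\<in>\<Omega>. 0 \<le> f x"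
    and qc: "QC \<Omega> \<mu> (\<lambda>x. f x powr p)"
  shows "sym_quasiconvex \<Omega> f"
proof
  have f_eq: "f x = (f x powr p) powr (1 / p)" if "x \<in> \<Omega>" for x
    using nonneg that p by (simp add: powr_powr)
  have "continuous_on \<Omega> (\<lambda>x. f x powr p)" using qc by (simp add: QC_def)
  from continuous_on_powr'[OF this continuous_on_const, of "1 / p"]
  have "continuous_on \<Omega> (\<lambda>x. (f x powr p) powr (1 / p))" using p by simp
  then show "continuous_on \<Omega> f" by (rule continuous_on_eq) (use f_eq in auto)
  show "f (- x) = f x" if x: "x \<in> \<Omega>" for x
  proof -
    have "- x \<in> \<Omega>" using \<Omega> x unfolding sym_convex_domain_def by (metis imageI minus_minus)
    moreover have "f (- x) powr p = f x powr p" using qc x by (simp add: QC_def)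
    ultimately show ?thesis using f_eq[OF x] f_eq[of "- x"] by metis
  qed
  show "convex {x\<in>\<Omega>. f x < s}" for s
  proof (cases "0 < s")
    case True
    have "f x < s \<longleftrightarrow> f x powr p < s powr p" if "x \<in> \<Omega>" for x
      using nonneg that p True powr_less_mono2[of p "f x" s] powr_mono2[of p s "f x"] by force
    then have "{x\<in>\<Omega>. f x < s} = {x\<in>\<Omega>. f x powr p < s powr p}" by auto
    then show ?thesis using qc by (simp add: QC_def)
  next
    case False
    then have "{x\<in>\<Omega>. f x < s} = {}" using nonneg by force
    then show ?thesis by (metis convex_empty)
  qed
qed (use \<Omega> in simp)

section \<open>Boundary measure of sublevel sets\<close>

locale sym_quasiconvex_prob = sym_quasiconvex +
  fixes \<mu> :: "'a measure"
  assumes prob: "prob_space \<mu>" and sets_\<mu>: "sets \<mu> = sets borel" and emeasure_domain: "emeasure \<mu> \<Omega> = 1"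
begin

interpretation prob_space \<mu> by (rule prob)

definition shell :: "real \<Rightarrow> real \<Rightarrow> 'a set" where
  "shell \<epsilon> s = {x\<in>\<Omega>. f (contraction \<epsilon> *\<^sub>R x) < s \<and> s \<le> f x}"

lemma space_\<mu>: "space \<mu> = UNIV"
  using sets_eq_imp_space_eq[OF sets_\<mu>] by simp

lemma sets_domain: "\<Omega> \<in> sets \<mu>" and sets_sublevel: "sublevel s \<in> sets \<mu>"
  using open_domain open_sublevel by (simp_all add: sets_\<mu>)

lemma sets_shell:
  assumes "0 < \<epsilon>" "\<epsilon> < 1"
  shows "shell \<epsilon> s \<in> sets \<mu>"
proof -
  have "shell \<epsilon> s = \<Omega> \<inter> (\<lambda>x. contraction \<epsilon> *\<^sub>R x) -` sublevel s - sublevel s"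
    using scaleR_mem contraction_bounds[OF assms] by (auto simp: shell_def sublevel_def)
  moreover have "open ((\<lambda>x. contraction \<epsilon> *\<^sub>R x) -` sublevel s)"
    by (rule open_vimage[OF open_sublevel]) (intro continuous_intros)
  ultimately show ?thesis
    using open_domain sets_sublevel by (auto simp: sets_\<mu>)
qed

lemma measure_compl_domain: "measure \<mu> (UNIV - \<Omega>) = 0"
  using prob_compl[OF sets_domain] emeasure_domain by (simp add: space_\<mu> emeasure_eq_measure)

lemma outer_measure_eps_ext_sublevel_le:
  assumes \<epsilon>: "0 < \<epsilon>" "\<epsilon> < 1"
  shows "enn2real (outer_measure_of \<mu> (eps_ext (sublevel s) \<epsilon>)) - measure \<mu> (sublevel s)
    \<le> measure \<mu> (shell \<epsilon> s)"
proof -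
  have compl: "UNIV - \<Omega> \<in> sets \<mu>" using sets.compl_sets[OF sets_domain] by (simp add: space_\<mu>)
  define B where "B = (UNIV - \<Omega>) \<union> sublevel s \<union> shell \<epsilon> s"
  have B: "B \<in> sets \<mu>" unfolding B_def using compl sets_sublevel sets_shell[OF \<epsilon>] by blast
  have "eps_ext (sublevel s) \<epsilon> \<subseteq> B"
  proof
    fix x assume "x \<in> eps_ext (sublevel s) \<epsilon>"
    then have "contraction \<epsilon> *\<^sub>R x \<in> sublevel s" by (rule contraction_scaleR_mem_sublevel[OF \<epsilon>])
    then show "x \<in> B" by (cases "f x < s") (auto simp: B_def sublevel_def shell_def)
  qed
  then have "outer_measure_of \<mu> (eps_ext (sublevel s) \<epsilon>) \<le> ennreal (measure \<mu> B)"
    unfolding outer_measure_of_def using B by (auto intro!: INF_lower simp: emeasure_eq_measure)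
  then have "enn2real (outer_measure_of \<mu> (eps_ext (sublevel s) \<epsilon>)) \<le> measure \<mu> B"
    by (metis enn2real_ennreal enn2real_mono ennreal_less_top measure_nonneg)
  also have "\<dots> \<le> measure \<mu> ((UNIV - \<Omega>) \<union> sublevel s) + measure \<mu> (shell \<epsilon> s)"
    unfolding B_def using compl sets_sublevel sets_shell[OF \<epsilon>] by (intro measure_Un_le) auto
  also have "\<dots> \<le> measure \<mu> (UNIV - \<Omega>) + measure \<mu> (sublevel s) + measure \<mu> (shell \<epsilon> s)"
    using compl sets_sublevel by (intro add_right_mono measure_Un_le) auto
  finally show ?thesis using measure_compl_domain by simp
qed

lemma mu_star_sublevel_le_liminf:
  assumes e: "\<And>n. 0 < e n" "\<And>n. e n < 1" "e \<longlonglongrightarrow> 0"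
  shows "mu_star \<mu> (sublevel s) \<le> liminf (\<lambda>n. ereal (measure \<mu> (shell (e n) s) / e n))"
proof -
  have "filterlim e (at_right 0) sequentially"
    by (rule tendsto_imp_filterlim_at_right[OF e(3)]) (use e(1) in auto)
  then have "mu_star \<mu> (sublevel s) \<le> liminf (\<lambda>n. ereal ((enn2real (outer_measure_of \<mu>
      (eps_ext (sublevel s) (e n))) - measure \<mu> (sublevel s)) / e n))"
    unfolding mu_star_def by (rule Liminf_filterlim_le)
  also have "\<dots> \<le> liminf (\<lambda>n. ereal (measure \<mu> (shell (e n) s) / e n))"
  proof (intro Liminf_mono always_eventually allI)
    fix n
    show "ereal ((enn2real (outer_measure_of \<mu> (eps_ext (sublevel s) (e n))) - measure \<mu> (sublevel s)) / e n)
        \<le> ereal (measure \<mu> (shell (e n) s) / e n)"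
      using divide_right_mono[OF outer_measure_eps_ext_sublevel_le[OF e(1,2)] less_imp_le[OF e(1)]]
      by simp
  qed
  finally show ?thesis .
qed

lemma borel_measurable_shell_indicator:
  assumes [measurable]: "\<sigma> \<in> borel_measurable borel" and \<epsilon>: "0 < \<epsilon>" "\<epsilon> < 1"
  shows "(\<lambda>(t, x). indicator (shell \<epsilon> (\<sigma> t)) x :: ennreal) \<in> borel_measurable (lborel \<Otimes>\<^sub>M \<mu>)"
proof -
  define F where "F x = (if x \<in> \<Omega> then f x else 0)" for x
  have [measurable]: "F \<in> borel_measurable borel"
    unfolding F_def by (rule borel_measurable_continuous_on_if) (use open_domain continuous in auto)
  have [measurable]: "\<Omega> \<in> sets borel" using open_domain by simp
  have [measurable]: "(\<lambda>x. F (contraction \<epsilon> *\<^sub>R x)) \<in> borel_measurable borel" by measurable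
  define S where "S = {z. snd z \<in> \<Omega> \<and> F (contraction \<epsilon> *\<^sub>R snd z) < \<sigma> (fst z) \<and> \<sigma> (fst z) \<le> F (snd z)}"
  have cx: "contraction \<epsilon> *\<^sub>R x \<in> \<Omega>" if "x \<in> \<Omega>" for x
    using scaleR_mem[OF that] contraction_bounds[OF \<epsilon>] by blast
  have "(\<lambda>(t, x). indicator (shell \<epsilon> (\<sigma> t)) x :: ennreal) = indicator S"
  proof (intro ext, clarify)
    fix t x
    show "indicator (shell \<epsilon> (\<sigma> t)) x = (indicator S (t, x) :: ennreal)"
      using cx[of x] by (simp add: S_def shell_def F_def indicator_def)
  qed
  moreover have "{z \<in> space (borel \<Otimes>\<^sub>M borel). snd z \<in> \<Omega> \<and> F (contraction \<epsilon> *\<^sub>R snd z) < \<sigma> (fst z)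
      \<and> \<sigma> (fst z) \<le> F (snd z)} \<in> sets (borel \<Otimes>\<^sub>M borel)"
    by measurable
  then have "S \<in> sets (borel \<Otimes>\<^sub>M borel)" by (simp add: S_def space_pair_measure)
  then have "S \<in> sets (lborel \<Otimes>\<^sub>M \<mu>)" by (subst sets_pair_measure_cong[OF sets_lborel sets_\<mu>])
  ultimately show ?thesis by simp
qed

lemma borel_measurable_shell_layer:
  fixes w :: "real \<Rightarrow> ennreal"
  assumes [measurable]: "w \<in> borel_measurable borel" "\<sigma> \<in> borel_measurable borel" and \<epsilon>: "0 < \<epsilon>" "\<epsilon> < 1"
  shows "(\<lambda>(t, x). w t * indicator (shell \<epsilon> (\<sigma> t)) x) \<in> borel_measurable (lborel \<Otimes>\<^sub>M \<mu>)"
  using borel_measurable_shell_indicator[OF assms(2) \<epsilon>] by measurable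

lemma nn_integral_emeasure_shell_Fubini:
  fixes w :: "real \<Rightarrow> ennreal"
  assumes [measurable]: "w \<in> borel_measurable borel" "\<sigma> \<in> borel_measurable borel" and \<epsilon>: "0 < \<epsilon>" "\<epsilon> < 1"
  shows "(\<integral>\<^sup>+t. w t * emeasure \<mu> (shell \<epsilon> (\<sigma> t)) \<partial>lborel)
    = (\<integral>\<^sup>+x. \<integral>\<^sup>+t. w t * indicator (shell \<epsilon> (\<sigma> t)) x \<partial>lborel \<partial>\<mu>)"
proof -
  interpret pair_sigma_finite lborel \<mu> by unfold_locales
  have "(\<integral>\<^sup>+t. w t * emeasure \<mu> (shell \<epsilon> (\<sigma> t)) \<partial>lborel)
      = (\<integral>\<^sup>+t. \<integral>\<^sup>+x. w t * indicator (shell \<epsilon> (\<sigma> t)) x \<partial>\<mu> \<partial>lborel)"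
    using sets_shell[OF \<epsilon>] by (simp add: nn_integral_cmult_indicator)
  also have "\<dots> = (\<integral>\<^sup>+x. \<integral>\<^sup>+t. w t * indicator (shell \<epsilon> (\<sigma> t)) x \<partial>lborel \<partial>\<mu>)"
    using borel_measurable_shell_layer[OF assms] by (intro Fubini'[symmetric]) simp
  finally show ?thesis .
qed

lemma borel_measurable_shell_layer_integral:
  fixes w :: "real \<Rightarrow> ennreal"
  assumes "w \<in> borel_measurable borel" "\<sigma> \<in> borel_measurable borel" and \<epsilon>: "0 < \<epsilon>" "\<epsilon> < 1"
  shows "(\<lambda>x. \<integral>\<^sup>+t. w t * indicator (shell \<epsilon> (\<sigma> t)) x \<partial>lborel) \<in> borel_measurable \<mu>"
proof -
  interpret pair_sigma_finite \<mu> lborel by unfold_locales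
  have "(\<lambda>(x, t). w t * indicator (shell \<epsilon> (\<sigma> t)) x) \<in> borel_measurable (\<mu> \<Otimes>\<^sub>M lborel)"
    using measurable_pair_swap[OF borel_measurable_shell_layer[OF assms]] by simp
  then show ?thesis by measurable
qed

lemma borel_measurable_emeasure_shell:
  fixes w :: "real \<Rightarrow> ennreal"
  assumes "w \<in> borel_measurable borel" "\<sigma> \<in> borel_measurable borel" and \<epsilon>: "0 < \<epsilon>" "\<epsilon> < 1"
  shows "(\<lambda>t. w t * emeasure \<mu> (shell \<epsilon> (\<sigma> t))) \<in> borel_measurable lborel"
proof -
  have "(\<lambda>t. \<integral>\<^sup>+x. w t * indicator (shell \<epsilon> (\<sigma> t)) x \<partial>\<mu>) \<in> borel_measurable lborel"
    using borel_measurable_shell_layer[OF assms] by measurable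
  then show ?thesis using sets_shell[OF \<epsilon>] by (simp add: nn_integral_cmult_indicator)
qed

lemma ennreal_mult_mu_star_sublevel_le_liminf:
  assumes k: "0 \<le> k" and e: "\<And>n. 0 < e n" "\<And>n. e n < 1" "e \<longlonglongrightarrow> 0"
  shows "ennreal k * e2ennreal (mu_star \<mu> (sublevel s))
    \<le> liminf (\<lambda>n. ennreal k * emeasure \<mu> (shell (e n) s) * ennreal (1 / e n))"
proof -
  have "ereal k * mu_star \<mu> (sublevel s) \<le> ereal k * liminf (\<lambda>n. ereal (measure \<mu> (shell (e n) s) / e n))"
    using mu_star_sublevel_le_liminf[OF e] k by (intro ereal_mult_left_mono) auto
  also have "\<dots> = liminf (\<lambda>n. ereal k * ereal (measure \<mu> (shell (e n) s) / e n))"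
    by (rule Liminf_ereal_mult_left[symmetric]) (use k in auto)
  finally have "e2ennreal (ereal k * mu_star \<mu> (sublevel s))
      \<le> liminf (\<lambda>n. ennreal (k * (measure \<mu> (shell (e n) s) / e n)))"
    unfolding liminf_ennreal_eq_e2ennreal by (intro e2ennreal_mono) simp
  moreover have "ennreal (k * (measure \<mu> (shell (e n) s) / e n))
      = ennreal k * emeasure \<mu> (shell (e n) s) * ennreal (1 / e n)" for n
    using k e(1)[of n] by (simp add: emeasure_eq_measure ennreal_mult'' divide_inverse mult.assoc)
  ultimately show ?thesis using k by (simp add: e2ennreal_ereal_mult)
qed

text \<open>Fatou's lemma in \<open>t\<close>, Tonelli, and the reverse Fatou lemma in \<open>x\<close> (which is where the
  domination by an integrable \<open>g\<close> is needed).\<close>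
lemma nn_integral_mu_star_sublevel_le:
  fixes w :: "real \<Rightarrow> ennreal" and \<sigma> :: "real \<Rightarrow> real" and e :: "nat \<Rightarrow> real"
    and R :: "nat \<Rightarrow> 'a \<Rightarrow> real" and g :: "'a \<Rightarrow> real" and T :: "'a \<Rightarrow> ennreal"
  assumes [measurable]: "w \<in> borel_measurable borel" "\<sigma> \<in> borel_measurable borel"
    and w: "\<And>t. w t \<noteq> \<top>"
    and e: "\<And>n. 0 < e n" "\<And>n. e n < 1" "e \<longlonglongrightarrow> 0"
    and layer: "\<And>n x. x \<in> \<Omega> \<Longrightarrow> (\<integral>\<^sup>+t. w t * indicator {t. f (contraction (e n) *\<^sub>R x) < \<sigma> t \<and> \<sigma> t \<le> f x} t
      \<partial>lborel) = ennreal (R n x)"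
    and g: "integrable \<mu> g" and dominated: "\<And>n x. x \<in> \<Omega> \<Longrightarrow> R n x / e n \<le> g x"
    and limsup: "\<And>x. x \<in> \<Omega> \<Longrightarrow> limsup (\<lambda>n. ennreal (R n x / e n)) \<le> T x"
  shows "(\<integral>\<^sup>+t. w t * e2ennreal (mu_star \<mu> (sublevel (\<sigma> t))) \<partial>lborel) \<le> (\<integral>\<^sup>+x. indicator \<Omega> x * T x \<partial>\<mu>)"
proof -
  define M where "M n t = w t * emeasure \<mu> (shell (e n) (\<sigma> t)) * ennreal (1 / e n)" for n t
  define u where "u n x = indicator \<Omega> x * ennreal (R n x / e n)" for n x
  have u_eq: "u n x = (\<integral>\<^sup>+t. w t * indicator (shell (e n) (\<sigma> t)) x \<partial>lborel) * ennreal (1 / e n)" for n x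
    using layer[of x n] e(1)[of n]
    by (cases "x \<in> \<Omega>") (simp_all add: u_def shell_def indicator_def ennreal_mult'' divide_inverse)
  have [measurable]: "u n \<in> borel_measurable \<mu>" "M n \<in> borel_measurable lborel" for n
    unfolding u_eq[abs_def] M_def
    using borel_measurable_shell_layer_integral[OF assms(1,2) e(1,2)]
      borel_measurable_emeasure_shell[OF assms(1,2) e(1,2)] by measurable
  have integral_M: "(\<integral>\<^sup>+t. M n t \<partial>lborel) = (\<integral>\<^sup>+x. u n x \<partial>\<mu>)" for n
    using borel_measurable_shell_layer_integral[OF assms(1,2) e(1,2)]
      borel_measurable_emeasure_shell[OF assms(1,2) e(1,2)]
    by (simp add: M_def u_eq nn_integral_multc nn_integral_emeasure_shell_Fubini[OF assms(1,2) e(1,2)])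
  have "(\<integral>\<^sup>+t. w t * e2ennreal (mu_star \<mu> (sublevel (\<sigma> t))) \<partial>lborel) \<le> (\<integral>\<^sup>+t. liminf (\<lambda>n. M n t) \<partial>lborel)"
  proof (intro nn_integral_mono)
    fix t
    obtain k where "0 \<le> k" "w t = ennreal k" using w[of t] by (cases "w t") auto
    then show "w t * e2ennreal (mu_star \<mu> (sublevel (\<sigma> t))) \<le> liminf (\<lambda>n. M n t)"
      using ennreal_mult_mu_star_sublevel_le_liminf[OF _ e] by (simp add: M_def)
  qed
  also have "\<dots> \<le> liminf (\<lambda>n. \<integral>\<^sup>+t. M n t \<partial>lborel)"
    by (rule nn_integral_liminf) simp
  also have "\<dots> \<le> limsup (\<lambda>n. \<integral>\<^sup>+x. u n x \<partial>\<mu>)"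
    unfolding integral_M by (rule Liminf_le_Limsup) simp
  also have "\<dots> \<le> (\<integral>\<^sup>+x. limsup (\<lambda>n. u n x) \<partial>\<mu>)"
  proof (rule nn_integral_limsup)
    show "(\<lambda>x. ennreal (norm (g x))) \<in> borel_measurable \<mu>" using g by measurable
    show "(\<integral>\<^sup>+x. ennreal (norm (g x)) \<partial>\<mu>) < \<infinity>" using g by (simp add: integrable_iff_bounded)
    show "AE x in \<mu>. u n x \<le> ennreal (norm (g x))" for n
    proof (intro AE_I2)
      fix x
      have "x \<in> \<Omega> \<Longrightarrow> R n x / e n \<le> norm (g x)" using dominated[of x n] by simp
      then show "u n x \<le> ennreal (norm (g x))" by (auto simp: u_def indicator_def intro: ennreal_leI)
    qed
  qed simp
  also have "\<dots> \<le> (\<integral>\<^sup>+x. indicator \<Omega> x * T x \<partial>\<mu>)"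
    using limsup by (intro nn_integral_mono) (simp add: u_def indicator_def Limsup_const)
  finally show ?thesis .
qed

lemma nn_integral_mu_star_sublevel_powr_le:
  assumes p: "0 < p" and nonneg: "\<forall>x\<in>\<Omega>. 0 \<le> f x" and qc: "QC \<Omega> \<mu> (\<lambda>x. f x powr p)"
  shows "(\<integral>\<^sup>+ t. indicator {0<..} t * ennreal (t powr (p - 1)) *
      e2ennreal (mu_star \<mu> {x\<in>\<Omega>. f x < t}) \<partial>lborel)
    \<le> (\<integral>\<^sup>+ x. indicator \<Omega> x * ennreal (f x powr (p - 1)) * e2ennreal (Phi f x) \<partial>\<mu>)"
proof -
  obtain g e where g: "integrable \<mu> g" and e: "\<And>n. 0 < e n" "\<And>n. e n < 1" "e \<longlonglongrightarrow> 0"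
    and dom: "\<And>n x. x \<in> \<Omega> \<Longrightarrow> (f x powr p - f (contraction (e n) *\<^sub>R x) powr p) / e n \<le> g x"
    using QC_dominating_sequence[OF qc] by blast
  define R where "R n x = (f x powr p - f (contraction (e n) *\<^sub>R x) powr p) / p" for n x
  have c: "0 \<le> contraction (e n)" "contraction (e n) \<le> 1" for n
    using contraction_bounds[OF e(1,2)] by auto
  have "(\<integral>\<^sup>+ t. indicator {0<..} t * ennreal (t powr (p - 1)) *
      e2ennreal (mu_star \<mu> (sublevel t)) \<partial>lborel)
    \<le> (\<integral>\<^sup>+ x. indicator \<Omega> x * (ennreal (f x powr (p - 1)) * e2ennreal (Phi f x)) \<partial>\<mu>)"
  proof (rule nn_integral_mu_star_sublevel_le[where \<sigma> = "\<lambda>t. t" and R = R and g = "\<lambda>x. g x / p",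
        OF _ _ _ e])
    show "(\<integral>\<^sup>+ t. indicator {0<..} t * ennreal (t powr (p - 1)) *
        indicator {t. f (contraction (e n) *\<^sub>R x) < t \<and> t \<le> f x} t \<partial>lborel) = ennreal (R n x)"
      if "x \<in> \<Omega>" for n x
      unfolding R_def using nonneg scaleR_mem[OF that c] f_scaleR_le[OF that c] p
      by (intro nn_integral_powr_weight_between) auto
    show "R n x / e n \<le> g x / p" if "x \<in> \<Omega>" for n x
      using divide_right_mono[OF dom[OF that, of n], of p] p by (simp add: R_def field_simps)
    show "limsup (\<lambda>n. ennreal (R n x / e n)) \<le> ennreal (f x powr (p - 1)) * e2ennreal (Phi f x)"
      if x: "x \<in> \<Omega>" for x
    proof (cases "f x = 0")
      case True
      then have "f (contraction (e n) *\<^sub>R x) = 0" for n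
        using f_scaleR_le[OF x c] nonneg scaleR_mem[OF x c] by (metis order_antisym)
      then show ?thesis using True p by (simp add: R_def Limsup_const)
    next
      case False
      then have "0 < f x" using nonneg x by force
      from limsup_powr_difference_quotient_le_Phi[OF x this _ e, of p] p
      show ?thesis by (simp add: R_def)
    qed
  qed (use g in \<open>simp_all add: indicator_def\<close>)
  then show ?thesis by (simp add: sublevel_def mult.assoc)
qed

lemma nn_integral_mu_star_superlevel_inverse_powr_le:
  assumes p: "0 < p" and pos: "\<forall>x\<in>\<Omega>. 0 < f x" and qc: "QC \<Omega> \<mu> (\<lambda>x. f x powr p)"
  shows "(\<integral>\<^sup>+ t. indicator {0<..} t * ennreal (t powr (p - 1)) *
      e2ennreal (mu_star \<mu> {x\<in>\<Omega>. 1 / f x > t}) \<partial>lborel)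
    \<le> (\<integral>\<^sup>+ x. indicator \<Omega> x * ennreal (f x powr (- p - 1)) * e2ennreal (Phi f x) \<partial>\<mu>)"
proof -
  obtain g e where g: "integrable \<mu> g" and e: "\<And>n. 0 < e n" "\<And>n. e n < 1" "e \<longlonglongrightarrow> 0"
    and dom: "\<And>n x. x \<in> \<Omega> \<Longrightarrow> (f x powr p - f (contraction (e n) *\<^sub>R x) powr p) / e n \<le> g x"
    using QC_dominating_sequence[OF qc] by blast
  define R where "R n x = (f (contraction (e n) *\<^sub>R x) powr (- p) - f x powr (- p)) / p" for n x
  define m where "m = f 0 powr p"
  have m: "0 < m" using pos zero_mem by (auto simp: m_def)
  have m_le: "m \<le> f x powr p" if "x \<in> \<Omega>" for x
    using f_zero_le[OF that] pos zero_mem p unfolding m_def by (intro powr_mono2) auto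
  have c: "0 \<le> contraction (e n)" "contraction (e n) \<le> 1" for n
    using contraction_bounds[OF e(1,2)] by auto
  have "(\<integral>\<^sup>+ t. indicator {0<..} t * ennreal (t powr (p - 1)) *
      e2ennreal (mu_star \<mu> (sublevel (1 / t))) \<partial>lborel)
    \<le> (\<integral>\<^sup>+ x. indicator \<Omega> x * (ennreal (f x powr (- p - 1)) * e2ennreal (Phi f x)) \<partial>\<mu>)"
  proof (rule nn_integral_mu_star_sublevel_le[where \<sigma> = "\<lambda>t. 1 / t" and R = R
        and g = "\<lambda>x. g x / (p * m * m)", OF _ _ _ e])
    show "(\<integral>\<^sup>+ t. indicator {0<..} t * ennreal (t powr (p - 1)) *
        indicator {t. f (contraction (e n) *\<^sub>R x) < 1 / t \<and> 1 / t \<le> f x} t \<partial>lborel) = ennreal (R n x)"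
      if "x \<in> \<Omega>" for n x
      unfolding R_def using pos scaleR_mem[OF that c] f_scaleR_le[OF that c] p that
      by (intro nn_integral_powr_weight_inverse_between) auto
    show "R n x / e n \<le> g x / (p * m * m)" if x: "x \<in> \<Omega>" for n x
    proof -
      define y where "y = contraction (e n) *\<^sub>R x"
      have y: "y \<in> \<Omega>" "f y powr p \<le> f x powr p"
        using scaleR_mem[OF x c] f_scaleR_le[OF x c] pos x p by (auto simp: y_def powr_mono2 less_imp_le)
      have "R n x / e n = (1 / f y powr p - 1 / f x powr p) / p / e n"
        by (simp add: R_def powr_minus_divide y_def)
      also have "\<dots> \<le> ((f x powr p - f y powr p) / e n) / (p * m * m)"
        by (rule inverse_diff_div_le) (use m m_le[OF y(1)] y(2) e(1) p in auto)
      also have "\<dots> \<le> g x / (p * m * m)"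
        using dom[OF x, of n] m p by (intro divide_right_mono) (auto simp: y_def)
      finally show ?thesis .
    qed
    show "limsup (\<lambda>n. ennreal (R n x / e n)) \<le> ennreal (f x powr (- p - 1)) * e2ennreal (Phi f x)"
      if x: "x \<in> \<Omega>" for x
    proof -
      have "R n x / e n = (f x powr (- p) - f (contraction (e n) *\<^sub>R x) powr (- p)) / (- p * e n)" for n
        by (simp add: R_def divide_simps)
      with limsup_powr_difference_quotient_le_Phi[OF x pos[rule_format, OF x] _ e, of "- p"] p
      show ?thesis by simp
    qed
  qed (use g in \<open>simp_all add: indicator_def\<close>)
  moreover have "indicator {0<..} t * ennreal (t powr (p - 1)) * e2ennreal (mu_star \<mu> (sublevel (1 / t)))
      = indicator {0<..} t * ennreal (t powr (p - 1)) * e2ennreal (mu_star \<mu> {x\<in>\<Omega>. 1 / f x > t})" for t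
  proof (cases "0 < t")
    case True
    then have "sublevel (1 / t) = {x\<in>\<Omega>. 1 / f x > t}" using pos by (auto simp: sublevel_def field_simps)
    then show ?thesis by simp
  qed simp
  ultimately show ?thesis by (simp add: mult.assoc)
qed

end

theorem propositionp:
  fixes \<mu> :: "'a::euclidean_space measure" and \<Omega> :: "'a set" and p :: real
  assumes "sym_convex_domain \<Omega>"
    and "prob_space \<mu>" and "sets \<mu> = sets borel" and "emeasure \<mu> \<Omega> = 1"
    and "p > 0"
  shows "(\<forall>f :: 'a \<Rightarrow> real. (\<forall>x\<in>\<Omega>. 0 \<le> f x) \<and> QC \<Omega> \<mu> (\<lambda>x. f x powr p) \<longrightarrow>
           (\<integral>\<^sup>+ t. indicator {0<..} t * ennreal (t powr (p - 1)) *
               e2ennreal (mu_star \<mu> {x\<in>\<Omega>. f x < t}) \<partial>lborel)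
         \<le> (\<integral>\<^sup>+ x. indicator \<Omega> x * ennreal (f x powr (p - 1)) * e2ennreal (Phi f x) \<partial>\<mu>)) \<and>
         (\<forall>f :: 'a \<Rightarrow> real. (\<forall>x\<in>\<Omega>. 0 < f x) \<and> QC \<Omega> \<mu> (\<lambda>x. f x powr p) \<longrightarrow>
           (\<integral>\<^sup>+ t. indicator {0<..} t * ennreal (t powr (p - 1)) *
               e2ennreal (mu_star \<mu> {x\<in>\<Omega>. 1 / f x > t}) \<partial>lborel)
         \<le> (\<integral>\<^sup>+ x. indicator \<Omega> x * ennreal (f x powr (- p - 1)) * e2ennreal (Phi f x) \<partial>\<mu>))"
proof -
  have setting: "sym_quasiconvex_prob \<Omega> f \<mu>" if "\<forall>x\<in>\<Omega>. 0 \<le> f x" "QC \<Omega> \<mu> (\<lambda>x. f x powr p)"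
    for f :: "'a \<Rightarrow> real"
    using assms that
    by (intro sym_quasiconvex_prob.intro sym_quasiconvex_prob_axioms.intro QC_imp_sym_quasiconvex)
  show ?thesis
    by (intro conjI allI impI; elim conjE;
        rule sym_quasiconvex_prob.nn_integral_mu_star_sublevel_powr_le[OF setting]
          sym_quasiconvex_prob.nn_integral_mu_star_superlevel_inverse_powr_le[OF setting])
      (use assms(5) in \<open>auto intro: less_imp_le\<close>)
qed

end
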